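(* Fix a finite tensor order $N<\infty$. For an input tensor $\mathcal{Y}\in\mathbb{R}^{I_1\times\cdots\times I_N}$ let $P=\prod_{k=1}^N I_k$, $I_{(-k)}=\prod_{j\neq k}I_j$, let $r_k$ be the post-threshold rank of mode $k$, and $r_{(-k)}=\prod_{j\neq k}r_j$. Assume that, for each $k=1,\dots,N$, $r_k=\mathcal{O}(I_k^{\alpha_k})$ with $0\le\alpha_k<1$, and set $\alpha_{\max}=\max_k\alpha_k$. Suppose the computational cost of TARST is $$T_{\mathrm{TARST}}=\mathcal{O}\!\Bigg(\sum_{k=1}^{N}\Big[\min\{I_k^2 I_{(-k)},\,I_k I_{(-k)}^2\}+\min\{I_k,\,I_{(-k)}\}+\frac{P\,r_{(-k)}}{I_k}\Big]\Bigg).$$ Then $T_{\mathrm{TARST}}=\mathcal{O}(P^{1+\varepsilon})$ with $\varepsilon=\max\{1/2,\alpha_{\max}\}<1$; in particular TARST runs in polynomial time in the input size $P$, with exponent strictly less than $2$.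
   Context: TARST (Tensor Automatic Rank-free Singular-value Thresholding) is the following non-iterative algorithm on an $N$-way tensor $\mathcal{Y}$: for each mode $k$, form the mode-$k$ unfolding $\mathbf{Y}_{(k)}\in\mathbb{R}^{I_k\times I_{(-k)}}$ (mode-$k$ indices as rows, all other indices flattened into columns), compute its SVD, apply hard thresholding to its singular values with a data-dependent threshold $\tau_{(k)}$ (singular values below $\tau_{(k)}$ are set to zero), and let $r_k$ be the number of retained singular values (the post-threshold rank of mode $k$); then reconstruct a Tucker approximation $\hat{\mathcal{X}}=(\mathcal{Y}\times_1\mathbf{U}_{(1)}^\top\cdots\times_N\mathbf{U}_{(N)}^\top)\times_1\mathbf{U}_{(1)}\cdots\times_N\mathbf{U}_{(N)}$ from the retained left singular vectors $\mathbf{U}_{(k)}$. Under the dense linear algebra model, the three phases cost, per mode $k$: SVD $\mathcal{O}(\min\{I_k^2I_{(-k)},I_kI_{(-k)}^2\})$, thresholding $\mathcal{O}(\min\{I_k,I_{(-k)}\})$, reconstruction $\mathcal{O}(P\,r_{(-k)}/I_k)$; the total cost is the sum over modes. Asymptotic notation $\mathcal{O}(\cdot)$ refers to growth as the mode dimensions (hence $P$) grow, with $N$ fixed. *)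

theory Defs
  imports Complex_Main "HOL-Library.Landau_Symbols"
begin

text \<open>Modes are indexed by 0..N-1. A problem instance is described, along a filter F
  (the regime in which the mode dimensions grow), by the mode dimensions I x k
  and the post-threshold ranks r x k.\<close>

definition tensor_size :: "nat \<Rightarrow> (nat \<Rightarrow> nat) \<Rightarrow> real" where
  "tensor_size N I = (\<Prod>k<N. real (I k))"

definition prod_except :: "nat \<Rightarrow> (nat \<Rightarrow> nat) \<Rightarrow> nat \<Rightarrow> real" where
  "prod_except N I k = (\<Prod>j\<in>{..<N} - {k}. real (I j))"

definition tarst_cost_expr :: "nat \<Rightarrow> (nat \<Rightarrow> nat) \<Rightarrow> (nat \<Rightarrow> nat) \<Rightarrow> real" where
  "tarst_cost_expr N I r =
     (\<Sum>k<N. min (real (I k) ^ 2 * prod_except N I k) (real (I k) * prod_except N I k ^ 2)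
            + min (real (I k)) (prod_except N I k)
            + tensor_size N I * prod_except N r k / real (I k))"

end

theory Submission
  imports Defs
begin

text \<open>Write P = a b with a = I_k and b = I_(-k). The SVD term of mode k equals P min(a, b)
  and the thresholding term is min(a, b); since min(a, b) \<le> sqrt P, both are at most
  P^(3/2) \<le> P^(1+\<epsilon>). In the reconstruction term P r_(-k) / a = b r_(-k), every rank satisfies
  r_j = O(I_j^\<epsilon>), so r_(-k) = O(b^\<epsilon>) and the term is O(b^(1+\<epsilon>)), hence O(P^(1+\<epsilon>)). The sizes are natural numbers,
  so P is either 0 or at least 1, which is what makes larger powers of P dominate smaller ones.\<close>

lemma of_nat_powr_mono:
  assumes "a \<le> b"
  shows "real n powr a \<le> real n powr b"
  using assms by (cases "n = 0") (auto intro: powr_mono)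

lemma min_le_sqrt_mult:
  fixes a b :: real
  assumes "0 \<le> a" "0 \<le> b"
  shows "min a b \<le> sqrt (a * b)"
proof -
  have "min a b = sqrt (min a b * min a b)" using assms by simp
  also have "\<dots> \<le> sqrt (a * b)" using assms by (intro real_sqrt_le_mono mult_mono) auto
  finally show ?thesis .
qed

lemma tensor_size_eq_of_nat: "tensor_size N I = real (\<Prod>k<N. I k)"
  by (simp add: tensor_size_def)

lemma prod_except_nonneg: "0 \<le> prod_except N I k"
  by (simp add: prod_except_def prod_nonneg)

lemma tensor_size_split:
  assumes "k < N"
  shows "tensor_size N I = real (I k) * prod_except N I k"
  unfolding tensor_size_def prod_except_def using assms by (subst prod.remove[of _ k]) auto

lemma min_mode_le_sqrt_tensor_size:
  assumes "k < N"
  shows "min (real (I k)) (prod_except N I k) \<le> sqrt (tensor_size N I)"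
  using min_le_sqrt_mult[OF _ prod_except_nonneg] tensor_size_split[OF assms] by simp

lemma svd_cost_eq:
  assumes "k < N"
  shows "min (real (I k) ^ 2 * prod_except N I k) (real (I k) * prod_except N I k ^ 2)
           = tensor_size N I * min (real (I k)) (prod_except N I k)"
  using tensor_size_split[OF assms, of I]
  by (simp add: power2_eq_square min_mult_distrib_left prod_except_nonneg mult_ac)

lemma prod_except_le_powr:
  assumes "k < N" "0 \<le> c" and rank: "\<forall>j<N. real (r j) \<le> c * real (I j) powr e"
  shows "prod_except N r k \<le> c ^ (N - 1) * prod_except N I k powr e"
proof -
  let ?S = "{..<N} - {k}"
  have "prod_except N r k \<le> (\<Prod>j\<in>?S. c * real (I j) powr e)"
    unfolding prod_except_def by (rule prod_mono) (use rank in auto)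
  also have "\<dots> = c ^ card ?S * prod_except N I k powr e"
    by (simp add: prod.distrib prod_except_def prod_powr_distrib)
  also have "card ?S = N - 1" using \<open>k < N\<close> by simp
  finally show ?thesis .
qed

lemma reconstruction_cost_le:
  assumes "k < N" "0 \<le> c" "0 \<le> e" and rank: "\<forall>j<N. real (r j) \<le> c * real (I j) powr e"
  shows "tensor_size N I * prod_except N r k / real (I k)
           \<le> c ^ (N - 1) * tensor_size N I powr (1 + e)"
proof (cases "I k = 0")
  case False
  let ?b = "prod_except N I k"
  have "tensor_size N I * prod_except N r k / real (I k) = ?b * prod_except N r k"
    using tensor_size_split[OF \<open>k < N\<close>] False by simp
  also have "\<dots> \<le> ?b * (c ^ (N - 1) * ?b powr e)"
    using prod_except_le_powr[OF assms(1,2) rank] by (simp add: mult_left_mono prod_except_nonneg)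
  also have "\<dots> = c ^ (N - 1) * ?b powr (1 + e)"
    using prod_except_nonneg[of N I k] by (cases "?b = 0") (simp_all add: powr_add)
  also have "\<dots> \<le> c ^ (N - 1) * tensor_size N I powr (1 + e)"
  proof -
    have "?b \<le> tensor_size N I"
      using tensor_size_split[OF \<open>k < N\<close>] False prod_except_nonneg[of N I k]
      by (simp add: mult_le_cancel_right1)
    then show ?thesis
      using \<open>0 \<le> c\<close> \<open>0 \<le> e\<close> by (simp add: mult_left_mono powr_mono2 prod_except_nonneg)
  qed
  finally show ?thesis .
qed (simp add: \<open>0 \<le> c\<close>)

lemma sqrt_tensor_size_le_powr:
  assumes "1/2 \<le> e"
  shows "sqrt (tensor_size N I) \<le> tensor_size N I powr (1 + e)"
    and "tensor_size N I * sqrt (tensor_size N I) \<le> tensor_size N I powr (1 + e)"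
proof -
  let ?P = "tensor_size N I"
  have "0 \<le> ?P" by (simp add: tensor_size_def prod_nonneg)
  then have "sqrt ?P = ?P powr (1/2)" by (simp add: powr_half_sqrt)
  moreover have "?P * ?P powr (1/2) = ?P powr (3/2)"
    using powr_add[of ?P 1 "1/2"] \<open>0 \<le> ?P\<close> by simp
  moreover have "?P powr a \<le> ?P powr (1 + e)" if "a \<le> 1 + e" for a
    unfolding tensor_size_eq_of_nat using that by (rule of_nat_powr_mono)
  ultimately show "sqrt ?P \<le> ?P powr (1 + e)" "?P * sqrt ?P \<le> ?P powr (1 + e)"
    using assms by simp_all
qed

lemma tarst_cost_expr_le:
  assumes "1/2 \<le> e" "0 \<le> c" and rank: "\<forall>j<N. real (r j) \<le> c * real (I j) powr e"
  shows "tarst_cost_expr N I r \<le> real N * (2 + c ^ (N - 1)) * tensor_size N I powr (1 + e)"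
proof -
  let ?P = "tensor_size N I"
  have "min (real (I k) ^ 2 * prod_except N I k) (real (I k) * prod_except N I k ^ 2)
          + min (real (I k)) (prod_except N I k)
          + ?P * prod_except N r k / real (I k) \<le> (2 + c ^ (N - 1)) * ?P powr (1 + e)"
    if "k < N" for k
  proof -
    have min_le: "min (real (I k)) (prod_except N I k) \<le> sqrt ?P"
      using min_mode_le_sqrt_tensor_size[OF \<open>k < N\<close>] .
    have "?P * min (real (I k)) (prod_except N I k) \<le> ?P * sqrt ?P"
      using min_le by (simp add: mult_left_mono tensor_size_def prod_nonneg)
    then show ?thesis
      using svd_cost_eq[OF \<open>k < N\<close>, of I] min_le
        sqrt_tensor_size_le_powr[OF \<open>1/2 \<le> e\<close>, of N I]
        reconstruction_cost_le[OF \<open>k < N\<close> \<open>0 \<le> c\<close> _ rank] \<open>1/2 \<le> e\<close>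
      by (simp add: distrib_right)
  qed
  then have "tarst_cost_expr N I r \<le> (\<Sum>k<N. (2 + c ^ (N - 1)) * ?P powr (1 + e))"
    unfolding tarst_cost_expr_def by (intro sum_mono) simp
  then show ?thesis by simp
qed

lemma tarst_cost_expr_nonneg: "0 \<le> tarst_cost_expr N I r"
  unfolding tarst_cost_expr_def tensor_size_def
  by (intro sum_nonneg add_nonneg_nonneg divide_nonneg_nonneg mult_nonneg_nonneg
      prod_nonneg prod_except_nonneg min.boundedI zero_le_power) auto

lemma bigo_finite_family_uniform:
  fixes f g :: "'i \<Rightarrow> 'a \<Rightarrow> 'b :: real_normed_field"
  assumes "finite K" "\<forall>k\<in>K. f k \<in> O[F](g k)"
  shows "\<exists>c>0. eventually (\<lambda>x. \<forall>k\<in>K. norm (f k x) \<le> c * norm (g k x)) F"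
  using assms
proof (induction K rule: finite_induct)
  case empty
  show ?case by (intro exI[of _ 1]) simp
next
  case (insert k K)
  then obtain c where "c > 0"
    and c: "eventually (\<lambda>x. \<forall>k\<in>K. norm (f k x) \<le> c * norm (g k x)) F"
    by auto
  from insert.prems obtain d where "d > 0"
    and d: "eventually (\<lambda>x. norm (f k x) \<le> d * norm (g k x)) F"
    by (auto elim: landau_o.bigE)
  have "norm (f j x) \<le> max c d * norm (g j x)" if "norm (f j x) \<le> b * norm (g j x)" "b \<le> max c d"
    for j x b
    using that order_trans[OF that(1) mult_right_mono[OF that(2) norm_ge_zero]] by simp
  then have "eventually (\<lambda>x. \<forall>j\<in>insert k K. norm (f j x) \<le> max c d * norm (g j x)) F"
    using eventually_conj[OF c d] by (rule_tac eventually_mono) force+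
  then show ?case using \<open>c > 0\<close> by (intro exI[of _ "max c d"]) auto
qed

lemma tarst_cost_expr_bigo:
  assumes "1/2 \<le> e" "0 \<le> c"
    and rank: "eventually (\<lambda>x. \<forall>j<N. real (r x j) \<le> c * real (I x j) powr e) F"
  shows "(\<lambda>x. tarst_cost_expr N (I x) (r x)) \<in> O[F](\<lambda>x. tensor_size N (I x) powr (1 + e))"
proof (rule bigoI)
  show "eventually (\<lambda>x. norm (tarst_cost_expr N (I x) (r x))
          \<le> real N * (2 + c ^ (N - 1)) * norm (tensor_size N (I x) powr (1 + e))) F"
    using rank
    by eventually_elim (use tarst_cost_expr_le[OF assms(1,2)] tarst_cost_expr_nonneg in simp)
qed

theorem proposition1:
  fixes N :: nat and F :: "'a filter"
    and I r :: "'a \<Rightarrow> nat \<Rightarrow> nat" and \<alpha> :: "nat \<Rightarrow> real"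
    and T :: "'a \<Rightarrow> real" and \<epsilon> :: real
  assumes N_pos: "N \<ge> 1"
    and alpha_range: "\<forall>k<N. 0 \<le> \<alpha> k \<and> \<alpha> k < 1"
    and rank_growth: "\<forall>k<N. (\<lambda>x. real (r x k)) \<in> O[F](\<lambda>x. real (I x k) powr \<alpha> k)"
    and cost: "T \<in> O[F](\<lambda>x. tarst_cost_expr N (I x) (r x))"
    and eps_def: "\<epsilon> = max (1/2) (Max (\<alpha> ` {..<N}))"
  shows "T \<in> O[F](\<lambda>x. tensor_size N (I x) powr (1 + \<epsilon>)) \<and> \<epsilon> < 1"
proof
  have modes: "finite (\<alpha> ` {..<N})" "\<alpha> ` {..<N} \<noteq> {}"
    using N_pos by (auto simp: lessThan_empty_iff)
  show "\<epsilon> < 1" using alpha_range by (simp add: eps_def Max_less_iff[OF modes])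
  have "1/2 \<le> \<epsilon>" by (simp add: eps_def)
  have alpha_le_eps: "\<alpha> k \<le> \<epsilon>" if "k < N" for k
  proof -
    have "\<alpha> k \<le> Max (\<alpha> ` {..<N})" using that by (intro Max_ge modes) auto
    then show ?thesis by (simp add: eps_def)
  qed
  obtain c where "c > 0" and c: "eventually (\<lambda>x. \<forall>k\<in>{..<N}.
      norm (real (r x k)) \<le> c * norm (real (I x k) powr \<alpha> k)) F"
    using bigo_finite_family_uniform[of "{..<N}" "\<lambda>k x. real (r x k)" F
        "\<lambda>k x. real (I x k) powr \<alpha> k"] rank_growth by blast
  have exponent_mono: "c * real (I x k) powr \<alpha> k \<le> c * real (I x k) powr \<epsilon>" if "k < N" for x k
    using \<open>c > 0\<close> alpha_le_eps[OF that] by (intro mult_left_mono of_nat_powr_mono) auto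
  have "eventually (\<lambda>x. \<forall>k<N. real (r x k) \<le> c * real (I x k) powr \<epsilon>) F"
    using c by eventually_elim (auto intro: order_trans[OF _ exponent_mono])
  from tarst_cost_expr_bigo[OF \<open>1/2 \<le> \<epsilon>\<close> _ this] \<open>c > 0\<close>
  show "T \<in> O[F](\<lambda>x. tensor_size N (I x) powr (1 + \<epsilon>))"
    using cost by (auto intro: landau_o.big_trans)
qed

end
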